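(* Let $k\ge 1$, $0\le r<k$ and $n\ge 1$ be integers, and let $$B_n(k,r,x)=\left(\binom{i-k+1+r}{i-j}x^k+\binom{i+1+r}{i-j+1}\right)_{i,j=0}^{n-1}.$$ Then $x^r\det B_n(k,r,x)=F^{(k)}_{kn+r}(x)$.
   Context: Binomial coefficients are the generalized ones: for an integer $m$ (possibly negative) and an integer $j$, $\binom{m}{j}=\frac{m(m-1)\cdots(m-j+1)}{j!}$ if $j\ge 0$ and $\binom{m}{j}=0$ if $j<0$. For an integer $k\ge1$, the generalized Fibonacci polynomials $F^{(k)}_n(x)\in\mathbb{Z}[x]$ ($n\ge0$) are defined by $F^{(k)}_n(x)=x^n$ for $0\le n<k$ and $F^{(k)}_n(x)=xF^{(k)}_{n-1}(x)+F^{(k)}_{n-k}(x)$ for $n\ge k$. *)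

theory Defs
  imports "HOL-Computational_Algebra.Polynomial" "Jordan_Normal_Form.Determinant"
begin

text \<open>Generalized binomial coefficient for integer upper argument m and integer lower
argument j: m(m-1)...(m-j+1)/j! if j >= 0, and 0 if j < 0. The division is exact.\<close>
definition gbinom :: "int \<Rightarrow> int \<Rightarrow> int" where
  "gbinom m j = (if j < 0 then 0
     else (\<Prod>i<nat j. (m - int i)) div int (fact (nat j)))"

text \<open>Generalized Fibonacci polynomials F^(k)_n(x) in Z[x] (only meaningful for k >= 1;
  the k = 0 guard just ensures termination).\<close>
fun genfib :: "nat \<Rightarrow> nat \<Rightarrow> int poly" where
  "genfib k n = (if k = 0 \<or> n < k then monom 1 n
     else pCons 0 (genfib k (n - 1)) + genfib k (n - k))"

definition Bmat :: "nat \<Rightarrow> nat \<Rightarrow> nat \<Rightarrow> int poly mat" where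
  "Bmat n k r = mat n n (\<lambda>(i,j).
      smult (of_int (gbinom (int i - int k + 1 + int r) (int i - int j))) (monom 1 k)
      + [: of_int (gbinom (int i + 1 + int r) (int i - int j + 1)) :])"

end

theory Submission
  imports Defs "HOL-Computational_Algebra.Formal_Power_Series"
begin

text \<open>
  \<open>F\<^sub>m\<close> counts tilings of a strip of length m by squares of weight x and k-blocks of
  weight 1, so \<open>x\<^sup>r G\<^sub>j = F\<^sub>k\<^sub>j\<^sub>+\<^sub>r\<close> with
  \<open>G\<^sub>j = \<Sum>\<^sub>q C(j + r + (k-1)q, j - q) x\<^sup>k\<^sup>q\<close> (\<open>genfib_quotient k r j\<close>).
  B is lower Hessenberg with unit superdiagonal, and by two alternating Vandermonde
  convolutions row i of B annihilates \<open>(w\<^sub>0, \<dots>, w\<^sub>i\<^sub>+\<^sub>1)\<close> for \<open>w\<^sub>l = (-1)\<^sup>l G\<^sub>l\<close>.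
  Adding the columns \<open>l \<ge> 1\<close> with weights \<open>w\<^sub>l\<close> to the first one clears it except
  for \<open>-w\<^sub>n\<close> in the last row, and expanding along it gives \<open>det B = (-1)\<^sup>n w\<^sub>n = G\<^sub>n\<close>.
\<close>

subsection \<open>Generalized binomial coefficients\<close>

lemma gbinom_negative: "j < 0 \<Longrightarrow> gbinom m j = 0"
  by (simp add: gbinom_def)

lemma of_int_gbinom: "0 \<le> j \<Longrightarrow> (of_int (gbinom m j) :: 'a :: field_char_0) = of_int m gchoose nat j"
  using of_int_gbinomial[of m "nat j", where 'a='a] gbinomial_prod_rev[of m "nat j"]
  by (simp add: gbinom_def atLeast0LessThan)

lemma gbinom_0 [simp]: "gbinom m 0 = 1"
  by (simp add: gbinom_def)

lemma gbinom_of_nat: "gbinom (int N) (int M) = int (N choose M)"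
proof -
  have "(of_int (gbinom (int N) (int M)) :: rat) = of_int (int (N choose M))"
    by (simp add: of_int_gbinom binomial_gbinomial)
  then show ?thesis
    by (simp only: of_int_eq_iff)
qed

lemma gbinom_negated_upper: "gbinom m s = (-1) ^ nat s * gbinom (s - m - 1) s"
proof (cases "s < 0")
  case True
  then show ?thesis by (simp add: gbinom_negative)
next
  case False
  then have "(of_int (gbinom m s) :: rat) = of_int ((-1) ^ nat s * gbinom (s - m - 1) s)"
    using gbinomial_negated_upper[of "of_int m :: rat" "nat s"] by (simp add: of_int_gbinom)
  then show ?thesis
    by (simp only: of_int_eq_iff)
qed

lemma gbinom_Vandermonde:
  "(\<Sum>t=0..n. gbinom a (int t) * gbinom b (int n - int t)) = gbinom (a + b) (int n)"
proof -
  have "(of_int (\<Sum>t=0..n. gbinom a (int t) * gbinom b (int n - int t)) :: rat)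
      = (\<Sum>t=0..n. (of_int a gchoose t) * (of_int b gchoose (n - t)))"
  proof (intro of_int_sum[THEN trans] sum.cong refl)
    fix t assume "t \<in> {0..n}"
    then have "int n - int t = int (n - t)" by simp
    then show "(of_int (gbinom a (int t) * gbinom b (int n - int t)) :: rat)
        = (of_int a gchoose t) * (of_int b gchoose (n - t))"
      by (simp only: of_int_mult of_int_gbinom of_nat_0_le_iff nat_int)
  qed
  also have "\<dots> = of_int (gbinom (a + b) (int n))"
    by (simp add: gbinomial_Vandermonde of_int_gbinom)
  finally show ?thesis
    by (simp only: of_int_eq_iff)
qed

lemma gbinom_convolution:
  "(\<Sum>j=0..N. gbinom m (int N - int j) * gbinom b (int j - int q)) = gbinom (m + b) (int N - int q)"
proof (cases "N < q")
  case True
  then show ?thesis by (auto simp: gbinom_negative intro!: sum.neutral)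
next
  case False
  have "(\<Sum>j=0..N. gbinom m (int N - int j) * gbinom b (int j - int q))
      = (\<Sum>j=q..N. gbinom m (int N - int j) * gbinom b (int j - int q))"
    by (rule sum.mono_neutral_right) (auto simp: gbinom_negative)
  also have "\<dots> = (\<Sum>t=0..N-q. gbinom b (int t) * gbinom m (int (N - q) - int t))"
    using False sum.shift_bounds_cl_nat_ivl[of
        "\<lambda>j. gbinom m (int N - int j) * gbinom b (int j - int q)" 0 q "N - q"]
    by (simp add: of_nat_diff algebra_simps)
  also have "\<dots> = gbinom (m + b) (int N - int q)"
    using False gbinom_Vandermonde[of b m "N - q"] by (simp add: of_nat_diff add.commute)
  finally show ?thesis .
qed

lemma gbinom_alternating_convolution:
  "(\<Sum>j=0..N. (-1) ^ j * gbinom m (int N - int j) * gbinom (int j + p) (int j - int q))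
    = (-1) ^ q * gbinom (m - p - int q - 1) (int N - int q)"
proof -
  \<comment> \<open>negating the upper index turns the sign \<open>(-1)\<^sup>j\<close> into the constant \<open>(-1)\<^sup>q\<close>\<close>
  have sign: "(-1) ^ j * gbinom (int j + p) (int j - int q)
      = (-1) ^ q * gbinom (- p - int q - 1) (int j - int q)" for j
  proof (cases "j < q")
    case True
    then show ?thesis by (simp add: gbinom_negative)
  next
    case False
    then obtain e where j: "j = q + e"
      using le_Suc_ex not_less by blast
    have "(-1::int) ^ j * (-1) ^ e = (-1) ^ q"
      by (simp add: j power_add mult.assoc flip: power_mult_distrib)
    then show ?thesis
      by (subst gbinom_negated_upper) (simp add: j algebra_simps)
  qed
  have "(\<Sum>j=0..N. (-1) ^ j * gbinom m (int N - int j) * gbinom (int j + p) (int j - int q))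
      = (-1) ^ q * (\<Sum>j=0..N. gbinom m (int N - int j) * gbinom (- p - int q - 1) (int j - int q))"
    unfolding sum_distrib_left by (intro sum.cong refl) (metis sign mult.assoc mult.left_commute)
  also have "\<dots> = (-1) ^ q * gbinom (m + (- p - int q - 1)) (int N - int q)"
    by (simp only: gbinom_convolution)
  also have "m + (- p - int q - 1) = m - p - int q - 1"
    by simp
  finally show ?thesis .
qed

subsection \<open>Coefficients of the generalized Fibonacci polynomials\<close>

definition genfib_coeff :: "nat \<Rightarrow> nat \<Rightarrow> nat \<Rightarrow> int" where
  "genfib_coeff k m d =
     (if d \<le> m \<and> k dvd (m - d) then int ((d + (m - d) div k) choose ((m - d) div k)) else 0)"

lemma genfib_coeff_eq: "k \<ge> 1 \<Longrightarrow> genfib_coeff k (d + k * s) d = int ((d + s) choose s)"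
  by (simp add: genfib_coeff_def)

lemma genfib_coeff_eq_0:
  assumes "\<nexists>s. m = d + k * s"
  shows "genfib_coeff k m d = 0"
proof (rule ccontr)
  assume "genfib_coeff k m d \<noteq> 0"
  then have d: "d \<le> m" and dvd: "k dvd (m - d)"
    by (auto simp: genfib_coeff_def split: if_splits)
  from dvd obtain s where "m - d = k * s" ..
  with d have "m = d + k * s" by simp
  with assms show False by blast
qed

lemma genfib_coeff_step_0:
  assumes "k \<ge> 1" and "k \<le> m"
  shows "genfib_coeff k (m - k) 0 = genfib_coeff k m 0"
proof -
  have "(m - k) mod k = m mod k" "m div k = Suc ((m - k) div k)"
    using assms by (simp_all add: le_mod_geq le_div_geq)
  then show ?thesis
    by (simp add: genfib_coeff_def dvd_eq_mod_eq_0)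
qed

lemma genfib_coeff_step_Suc:
  assumes k: "k \<ge> 1" and m: "k \<le> m"
  shows "genfib_coeff k (m - 1) d + genfib_coeff k (m - k) (Suc d) = genfib_coeff k m (Suc d)"
proof (cases "\<exists>s. m = Suc d + k * s")
  case True
  then obtain s where s: "m = Suc d + k * s" by blast
  show ?thesis
  proof (cases s)
    case 0
    with s m k have "genfib_coeff k (m - k) (Suc d) = 0"
      by (intro genfib_coeff_eq_0) auto
    then show ?thesis
      using genfib_coeff_eq[OF k, of d 0] genfib_coeff_eq[OF k, of "Suc d" 0] s 0 by simp
  next
    case (Suc s')
    have "m - 1 = d + k * s" "m - k = Suc d + k * s'"
      using s Suc by simp_all
    then show ?thesis
      using s Suc genfib_coeff_eq[OF k, of d s] genfib_coeff_eq[OF k, of "Suc d" s']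
        genfib_coeff_eq[OF k, of "Suc d" s] by simp
  qed
next
  case False
  have "genfib_coeff k (m - 1) d = 0"
  proof (rule genfib_coeff_eq_0, rule notI)
    assume "\<exists>s. m - 1 = d + k * s"
    then obtain s where "m - 1 = d + k * s" ..
    with k m have "m = Suc d + k * s" by simp
    with False show False by blast
  qed
  moreover have "genfib_coeff k (m - k) (Suc d) = 0"
  proof (rule genfib_coeff_eq_0, rule notI)
    assume "\<exists>s. m - k = Suc d + k * s"
    then obtain s where "m - k = Suc d + k * s" ..
    with m have "m = Suc d + k * Suc s" by simp
    with False show False by blast
  qed
  ultimately show ?thesis
    using genfib_coeff_eq_0[OF False] by simp
qed

\<comment> \<open>as a rewrite rule the defining equation of \<open>genfib\<close> unfolds forever\<close>
declare genfib.simps [simp del]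

lemma genfib_less: "m < k \<Longrightarrow> genfib k m = monom 1 m"
  by (subst genfib.simps) simp

lemma genfib_rec: "1 \<le> k \<Longrightarrow> k \<le> m \<Longrightarrow> genfib k m = pCons 0 (genfib k (m - 1)) + genfib k (m - k)"
  by (subst genfib.simps) simp

lemma genfib_coeff_less:
  assumes k: "k \<ge> 1" and m: "m < k"
  shows "genfib_coeff k m d = (if m = d then 1 else 0)"
proof (cases "m = d")
  case True
  then show ?thesis using genfib_coeff_eq[OF k, of d 0] by simp
next
  case False
  have "\<nexists>s. m = d + k * s"
  proof
    assume "\<exists>s. m = d + k * s"
    then obtain s where s: "m = d + k * s" ..
    with False have "s \<noteq> 0" by auto
    then have "k \<le> k * s" by simp
    with s m show False by linarith
  qed
  with False show ?thesis by (simp add: genfib_coeff_eq_0)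
qed

lemma coeff_genfib:
  assumes k: "k \<ge> 1"
  shows "coeff (genfib k m) d = genfib_coeff k m d"
proof (induction m arbitrary: d rule: less_induct)
  case (less m)
  show ?case
  proof (cases "m < k")
    case True
    then show ?thesis by (simp add: genfib_less coeff_monom genfib_coeff_less[OF k])
  next
    case False
    then have mk: "k \<le> m" by simp
    have IH: "coeff (genfib k (m - 1)) d' = genfib_coeff k (m - 1) d'"
        "coeff (genfib k (m - k)) d' = genfib_coeff k (m - k) d'" for d'
      using less.IH k mk by simp_all
    show ?thesis
    proof (cases d)
      case 0
      then show ?thesis
        unfolding genfib_rec[OF k mk] coeff_add
        by (simp only: coeff_pCons_0 IH genfib_coeff_step_0[OF k mk] add_0)
    next
      case (Suc d')
      then show ?thesis
        unfolding genfib_rec[OF k mk] coeff_add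
        by (simp only: coeff_pCons_Suc IH genfib_coeff_step_Suc[OF k mk])
    qed
  qed
qed

subsection \<open>The polynomials \<open>G\<^sub>j\<close>\<close>

definition genfib_quotient_coeff :: "nat \<Rightarrow> nat \<Rightarrow> nat \<Rightarrow> nat \<Rightarrow> int" where
  "genfib_quotient_coeff k r j q = gbinom (int j + (int r + (int k - 1) * int q)) (int j - int q)"

definition genfib_quotient :: "nat \<Rightarrow> nat \<Rightarrow> nat \<Rightarrow> int poly" where
  "genfib_quotient k r j = (\<Sum>q\<le>j. monom (genfib_quotient_coeff k r j q) (k * q))"

lemma genfib_quotient_coeff_eq_0: "j < q \<Longrightarrow> genfib_quotient_coeff k r j q = 0"
  by (simp add: genfib_quotient_coeff_def gbinom_negative)

lemma genfib_quotient_0: "genfib_quotient k r 0 = 1"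
  by (simp add: genfib_quotient_def genfib_quotient_coeff_def one_pCons monom_0)

lemma coeff_genfib_quotient:
  assumes k: "k \<ge> 1"
  shows "coeff (genfib_quotient k r j) e =
           (if k dvd e then genfib_quotient_coeff k r j (e div k) else 0)"
proof -
  have "coeff (genfib_quotient k r j) e =
          (\<Sum>q\<le>j. if k * q = e then genfib_quotient_coeff k r j q else 0)"
    by (simp add: genfib_quotient_def coeff_sum coeff_monom)
  also have "\<dots> = (if k dvd e then genfib_quotient_coeff k r j (e div k) else 0)"
  proof (cases "k dvd e")
    case True
    then obtain q where e: "e = k * q" ..
    with k have "(\<Sum>q'\<le>j. if k * q' = e then genfib_quotient_coeff k r j q' else 0)
        = (\<Sum>q'\<le>j. if q' = q then genfib_quotient_coeff k r j q' else 0)"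
      by (intro sum.cong refl) simp
    also have "\<dots> = genfib_quotient_coeff k r j q"
      by (simp add: genfib_quotient_coeff_eq_0)
    finally show ?thesis
      using True e k by simp
  next
    case False
    then show ?thesis
      by (intro trans[OF sum.neutral]) auto
  qed
  finally show ?thesis .
qed

lemma coeff_monom_mult_genfib_quotient:
  "coeff (monom 1 r * genfib_quotient k r j) d =
     (\<Sum>q\<le>j. if k * q + r = d then genfib_quotient_coeff k r j q else 0)"
  by (simp add: genfib_quotient_def sum_distrib_left mult_monom coeff_sum coeff_monom add.commute)

lemma genfib_eq_monom_mult_genfib_quotient:
  assumes k: "k \<ge> 1" and r: "r < k"
  shows "genfib k (k * j + r) = monom 1 r * genfib_quotient k r j"
proof (rule poly_eqI)
  fix d
  have residue: "s \<le> j \<and> d = k * (j - s) + r" if "k * j + r = d + k * s" for s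
  proof -
    have "k * s < k * Suc j" using that r by simp
    then have "s \<le> j" by (simp del: mult_Suc_right)
    with that show ?thesis by (simp add: diff_mult_distrib2)
  qed
  show "coeff (genfib k (k * j + r)) d = coeff (monom 1 r * genfib_quotient k r j) d"
  proof (cases "\<exists>q\<le>j. d = k * q + r")
    case True
    then obtain q where q: "q \<le> j" "d = k * q + r" by blast
    have "k * j + r = d + k * (j - q)"
      using q by (simp add: diff_mult_distrib2)
    then have "coeff (genfib k (k * j + r)) d = int ((d + (j - q)) choose (j - q))"
      by (simp only: coeff_genfib[OF k] genfib_coeff_eq[OF k])
    also have "\<dots> = genfib_quotient_coeff k r j q"
    proof -
      have "int j + (int r + (int k - 1) * int q) = int (d + (j - q))" "int j - int q = int (j - q)"
        using q by (simp_all add: of_nat_diff algebra_simps)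
      then show ?thesis
        by (simp only: genfib_quotient_coeff_def gbinom_of_nat)
    qed
    also have "\<dots> = (\<Sum>q'\<le>j. if q' = q then genfib_quotient_coeff k r j q' else 0)"
      using q by simp
    also have "\<dots> = coeff (monom 1 r * genfib_quotient k r j) d"
      unfolding coeff_monom_mult_genfib_quotient using q k by (intro sum.cong refl) simp
    finally show ?thesis .
  next
    case False
    then have "coeff (genfib k (k * j + r)) d = 0"
      using residue by (auto simp: coeff_genfib[OF k] intro!: genfib_coeff_eq_0)
    also have "\<dots> = coeff (monom 1 r * genfib_quotient k r j) d"
      unfolding coeff_monom_mult_genfib_quotient using False by (intro sum.neutral[symmetric]) auto
    finally show ?thesis .
  qed
qed

subsection \<open>Lower Hessenberg determinants with a known kernel vector\<close>

lemma det_unit_lower_triangular: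
  assumes A: "A \<in> carrier_mat n n"
    and lower: "\<And>i j. i < j \<Longrightarrow> j < n \<Longrightarrow> A $$ (i, j) = 0"
    and diag: "\<And>i. i < n \<Longrightarrow> A $$ (i, i) = 1"
  shows "det A = 1"
proof -
  have "diag_mat A = replicate n 1"
    using A diag by (intro nth_equalityI) (auto simp: diag_mat_def)
  then show ?thesis
    by (simp add: det_lower_triangular[OF lower A])
qed

lemma det_first_column_single_entry:
  fixes M :: "'a :: comm_ring_1 mat"
  assumes M: "M \<in> carrier_mat (Suc m) (Suc m)"
    and zero: "\<And>i. i < m \<Longrightarrow> M $$ (i, 0) = 0"
  shows "det M = (-1) ^ m * M $$ (m, 0) * det (mat_delete M m 0)"
proof -
  have "det M = (\<Sum>i<Suc m. M $$ (i, 0) * cofactor M i 0)"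
    by (intro laplace_expansion_column[OF M]) simp
  also have "\<dots> = (\<Sum>i<m. M $$ (i, 0) * cofactor M i 0) + M $$ (m, 0) * cofactor M m 0"
    by (simp only: sum.lessThan_Suc)
  also have "(\<Sum>i<m. M $$ (i, 0) * cofactor M i 0) = 0"
    by (intro sum.neutral) (simp add: zero)
  finally show ?thesis
    by (simp add: cofactor_def ac_simps)
qed

lemma det_lower_hessenberg_kernel:
  fixes a :: "nat \<Rightarrow> nat \<Rightarrow> 'a :: comm_ring_1" and w :: "nat \<Rightarrow> 'a"
  assumes above: "\<And>i l. Suc i < l \<Longrightarrow> a i l = 0"
    and superdiag: "\<And>i. a i (Suc i) = 1"
    and w0: "w 0 = 1"
    and kernel: "\<And>i. i < n \<Longrightarrow> (\<Sum>l\<le>Suc i. a i l * w l) = 0"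
  shows "det (mat n n (\<lambda>(i, l). a i l)) = (-1) ^ n * w n"
proof (cases n)
  case 0
  then show ?thesis by (simp add: w0)
next
  case (Suc m)
  define A where "A = mat n n (\<lambda>(i, l). a i l)"
  define U where "U = mat n n (\<lambda>(l, j). if j = 0 then w l else if l = j then 1 else 0)"
  define M where "M = A * U"
  have A: "A \<in> carrier_mat n n" and U: "U \<in> carrier_mat n n"
    by (simp_all add: A_def U_def)
  then have M: "M \<in> carrier_mat n n"
    by (simp add: M_def)
  have "det U = 1"
    by (rule det_unit_lower_triangular[OF U]) (auto simp: U_def w0)
  then have det_A: "det A = det M"
    by (simp add: M_def det_mult[OF A U])
  have M_col0: "M $$ (i, 0) = (\<Sum>l<n. a i l * w l)" if "i < n" for i
    using that Suc by (simp add: M_def A_def U_def scalar_prod_def lessThan_atLeast0)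
  have M_colSuc: "M $$ (i, Suc j) = a i (Suc j)" if "i < n" "Suc j < n" for i j
  proof -
    have "col U (Suc j) = unit_vec n (Suc j)"
      using that by (auto simp: U_def unit_vec_def)
    then show ?thesis
      using that U by (simp add: M_def A_def)
  qed
  have M_col0_0: "M $$ (i, 0) = 0" if "i < m" for i
  proof -
    have "M $$ (i, 0) = (\<Sum>l<n. a i l * w l)"
      using that Suc by (simp add: M_col0)
    also have "\<dots> = (\<Sum>l\<le>Suc i. a i l * w l)"
      using that Suc by (intro sum.mono_neutral_right) (auto simp: above)
    also have "\<dots> = 0"
      using that Suc by (intro kernel) simp
    finally show ?thesis .
  qed
  have M_corner: "M $$ (m, 0) = - w n"
  proof -
    have "M $$ (m, 0) + w n = (\<Sum>l\<le>Suc m. a m l * w l)"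
      using Suc by (simp add: M_col0 superdiag lessThan_Suc_atMost)
    then show ?thesis
      using kernel[of m] Suc by (simp add: eq_neg_iff_add_eq_0)
  qed
  have det_minor: "det (mat_delete M m 0) = 1"
  proof (rule det_unit_lower_triangular)
    show "mat_delete M m 0 \<in> carrier_mat m m"
      using mat_delete_carrier[OF M, of m 0] Suc by simp
    have minor: "mat_delete M m 0 $$ (i, j) = a i (Suc j)" if "i < m" "j < m" for i j
      using that M Suc by (simp add: mat_delete_def M_colSuc)
    show "mat_delete M m 0 $$ (i, j) = 0" if "i < j" "j < m" for i j
      using that by (simp add: minor above)
    show "mat_delete M m 0 $$ (i, i) = 1" if "i < m" for i
      using that by (simp add: minor superdiag)
  qed
  have "det M = (-1) ^ m * M $$ (m, 0) * det (mat_delete M m 0)"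
    using M Suc M_col0_0 by (intro det_first_column_single_entry) simp_all
  then have "det M = (-1) ^ n * w n"
    using Suc by (simp add: M_corner det_minor)
  then show ?thesis
    unfolding A_def[symmetric] det_A .
qed

subsection \<open>The rows of \<open>B\<close> annihilate \<open>((-1)\<^sup>l G\<^sub>l)\<^sub>l\<close>\<close>

definition Bmat_entry :: "nat \<Rightarrow> nat \<Rightarrow> nat \<Rightarrow> nat \<Rightarrow> int poly" where
  "Bmat_entry k r i l =
     smult (of_int (gbinom (int i - int k + 1 + int r) (int i - int l))) (monom 1 k)
     + [: of_int (gbinom (int i + 1 + int r) (int i - int l + 1)) :]"

lemma Bmat_eq: "Bmat n k r = mat n n (\<lambda>(i, l). Bmat_entry k r i l)"
  by (simp add: Bmat_def Bmat_entry_def)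

lemma Bmat_entry_eq_0: "Suc i < l \<Longrightarrow> Bmat_entry k r i l = 0"
  by (simp add: Bmat_entry_def gbinom_negative)

lemma Bmat_entry_superdiag: "Bmat_entry k r i (Suc i) = 1"
  by (simp add: Bmat_entry_def gbinom_negative one_pCons)

lemma coeff_Bmat_entry_mult:
  "coeff (Bmat_entry k r i l * p) d =
     gbinom (int i - int k + 1 + int r) (int i - int l) * (if d < k then 0 else coeff p (d - k))
     + gbinom (int i + 1 + int r) (int i - int l + 1) * coeff p d"
  by (simp add: Bmat_entry_def distrib_right coeff_monom_mult)

lemma alternating_sum_const_coeffs:
  "(\<Sum>l\<le>Suc i. gbinom (int i + 1 + int r) (int i - int l + 1) * ((-1) ^ l * genfib_quotient_coeff k r l q))
    = (-1) ^ q * gbinom (int i - int k * int q) (int (Suc i) - int q)"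
proof -
  let ?p = "int r + (int k - 1) * int q"
  have "(\<Sum>l\<le>Suc i. gbinom (int i + 1 + int r) (int i - int l + 1) * ((-1) ^ l * genfib_quotient_coeff k r l q))
      = (\<Sum>l=0..Suc i. (-1) ^ l * gbinom (int i + 1 + int r) (int (Suc i) - int l)
           * gbinom (int l + ?p) (int l - int q))"
  proof (intro sum.cong)
    fix l
    have "int i - int l + 1 = int (Suc i) - int l" by simp
    then show "gbinom (int i + 1 + int r) (int i - int l + 1) * ((-1) ^ l * genfib_quotient_coeff k r l q)
        = (-1) ^ l * gbinom (int i + 1 + int r) (int (Suc i) - int l) * gbinom (int l + ?p) (int l - int q)"
      by (simp only: genfib_quotient_coeff_def ac_simps)
  qed (simp add: atMost_atLeast0)
  also have "\<dots> = (-1) ^ q * gbinom (int i + 1 + int r - ?p - int q - 1) (int (Suc i) - int q)"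
    by (rule gbinom_alternating_convolution)
  also have "int i + 1 + int r - ?p - int q - 1 = int i - int k * int q"
    by (simp add: algebra_simps)
  finally show ?thesis .
qed

lemma alternating_sum_lead_coeffs:
  "(\<Sum>l\<le>Suc i. gbinom (int i - int k + 1 + int r) (int i - int l) * ((-1) ^ l * genfib_quotient_coeff k r l q))
    = (-1) ^ q * gbinom (int i - int k * int (Suc q)) (int i - int q)"
proof -
  let ?p = "int r + (int k - 1) * int q"
  have "(\<Sum>l\<le>Suc i. gbinom (int i - int k + 1 + int r) (int i - int l) * ((-1) ^ l * genfib_quotient_coeff k r l q))
      = (\<Sum>l\<le>i. gbinom (int i - int k + 1 + int r) (int i - int l) * ((-1) ^ l * genfib_quotient_coeff k r l q))"
    by (simp add: gbinom_negative)
  also have "\<dots> = (\<Sum>l=0..i. (-1) ^ l * gbinom (int i - int k + 1 + int r) (int i - int l)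
           * gbinom (int l + ?p) (int l - int q))"
    by (simp only: genfib_quotient_coeff_def atMost_atLeast0 ac_simps)
  also have "\<dots> = (-1) ^ q * gbinom (int i - int k + 1 + int r - ?p - int q - 1) (int i - int q)"
    by (rule gbinom_alternating_convolution)
  also have "int i - int k + 1 + int r - ?p - int q - 1 = int i - int k * int (Suc q)"
    by (simp add: algebra_simps)
  finally show ?thesis .
qed

lemma Bmat_entry_kernel:
  assumes k: "k \<ge> 1"
  shows "(\<Sum>l\<le>Suc i. Bmat_entry k r i l * smult ((-1) ^ l) (genfib_quotient k r l)) = 0"
proof (rule poly_eqI)
  fix d
  let ?lead = "\<lambda>l. gbinom (int i - int k + 1 + int r) (int i - int l)"
  let ?const = "\<lambda>l. gbinom (int i + 1 + int r) (int i - int l + 1)"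
  let ?G = "\<lambda>l e. (-1) ^ l * coeff (genfib_quotient k r l) e"
  have "coeff (\<Sum>l\<le>Suc i. Bmat_entry k r i l * smult ((-1) ^ l) (genfib_quotient k r l)) d
      = (\<Sum>l\<le>Suc i. ?lead l * (if d < k then 0 else ?G l (d - k)) + ?const l * ?G l d)"
    by (simp only: coeff_sum coeff_Bmat_entry_mult coeff_smult)
  also have "\<dots> = 0"
  proof (cases "k dvd d")
    case False
    then have "\<not> k dvd (d - k)" if "\<not> d < k"
      using that by (metis dvd_add_left_iff dvd_refl le_add_diff_inverse2 not_less)
    with False show ?thesis
      by (auto simp: coeff_genfib_quotient[OF k] intro!: sum.neutral)
  next
    case True
    then obtain q where d: "d = k * q" ..
    show ?thesis
    proof (cases q)
      case 0
      with d k have "(\<Sum>l\<le>Suc i. ?lead l * (if d < k then 0 else ?G l (d - k)) + ?const l * ?G l d)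
          = (\<Sum>l\<le>Suc i. ?const l * ((-1) ^ l * genfib_quotient_coeff k r l 0))"
        by (simp add: coeff_genfib_quotient[OF k])
      also have "\<dots> = gbinom (int i) (int (Suc i))"
        by (simp only: alternating_sum_const_coeffs) simp
      also have "\<dots> = 0"
        by (simp only: gbinom_of_nat) simp
      finally show ?thesis .
    next
      case (Suc p)
      with d k have "\<not> d < k" "d - k = k * p"
        by (simp_all add: algebra_simps)
      with d k have "(\<Sum>l\<le>Suc i. ?lead l * (if d < k then 0 else ?G l (d - k)) + ?const l * ?G l d)
          = (\<Sum>l\<le>Suc i. ?lead l * ((-1) ^ l * genfib_quotient_coeff k r l p))
            + (\<Sum>l\<le>Suc i. ?const l * ((-1) ^ l * genfib_quotient_coeff k r l q))"
        by (simp add: coeff_genfib_quotient[OF k] sum.distrib)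
      also have "\<dots> = 0"
        by (simp only: Suc alternating_sum_const_coeffs alternating_sum_lead_coeffs) simp
      finally show ?thesis .
    qed
  qed
  finally show "coeff (\<Sum>l\<le>Suc i. Bmat_entry k r i l * smult ((-1) ^ l) (genfib_quotient k r l)) d
      = coeff 0 d" by simp
qed

theorem theorem2:
  fixes k r n :: nat
  assumes "k \<ge> 1" and "r < k" and "n \<ge> 1"
  shows "monom 1 r * det (Bmat n k r) = genfib k (k * n + r)"
proof -
  have "det (Bmat n k r) = (-1) ^ n * smult ((-1) ^ n) (genfib_quotient k r n)"
    unfolding Bmat_eq
  proof (rule det_lower_hessenberg_kernel[where w = "\<lambda>l. smult ((-1) ^ l) (genfib_quotient k r l)"])
    show "Bmat_entry k r i l = 0" if "Suc i < l" for i l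
      using that by (rule Bmat_entry_eq_0)
    show "Bmat_entry k r i (Suc i) = 1" for i
      by (rule Bmat_entry_superdiag)
    show "smult ((-1) ^ 0) (genfib_quotient k r 0) = 1"
      by (simp add: genfib_quotient_0)
    show "(\<Sum>l\<le>Suc i. Bmat_entry k r i l * smult ((-1) ^ l) (genfib_quotient k r l)) = 0" for i
      by (rule Bmat_entry_kernel[OF assms(1)])
  qed
  also have "\<dots> = genfib_quotient k r n"
  proof -
    have "(-1 :: int poly) ^ n = smult ((-1) ^ n) 1"
      by (induction n) (simp_all add: mult_smult_left)
    then show ?thesis
      by (simp add: mult_smult_left mult_smult_right flip: power_mult_distrib)
  qed
  finally show ?thesis
    using genfib_eq_monom_mult_genfib_quotient[OF assms(1,2)] by simp
qed

end
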